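(* Let $\sigma$ be a permutation of length $m$ with exactly one descent and exactly $i$ adjacency pairs, and let $\pi\in\{M_n,W_n\}$ have exactly one descent, with $\sigma\le\pi$. Then $$\mu(\sigma,\pi)=(-1)^{n-m}\binom{\lfloor (n+m-i-a)/2\rfloor}{m},$$ where $a=0$ if $\sigma$ and $\pi$ are related and $a=1$ otherwise.
   Context: A permutation of length $n$ is an arrangement of $1,\dots,n$. The permutation poset is ordered by pattern containment: $\sigma\le\pi$ if $\pi$ has a subsequence in the same relative order as $\sigma$. $\mu$ is its Möbius function: $\mu(a,a)=1$, $\mu(a,b)=-\sum_{a\le z<b}\mu(a,z)$ for $a<b$, $\mu(a,b)=0$ if $a\not\le b$. A descent is an index $d$ with $\pi_d>\pi_{d+1}$. An adjacency pair is an index $j$ with $\sigma_{j+1}=\sigma_j+1$; the number of adjacency pairs is the number of such indices. $M_n$ lists the even numbers $2,4,\dots\le n$ increasingly followed by the odd numbers $1,3,\dots\le n$ increasingly (e.g. $M_6=246135$); $W_n$ lists the odd numbers increasingly followed by the even numbers increasingly (e.g. $W_5=13524$). Two permutations with exactly one descent are related if the letter $1$ lies on the same side of the descent in both (i.e. in both it is before the descent, or in both it is after the descent). *)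

theory Defs
  imports Main
begin

definition is_perm :: "nat list \<Rightarrow> bool" where
  "is_perm xs \<longleftrightarrow> distinct xs \<and> set xs = {1..length xs}"

definition order_iso :: "nat list \<Rightarrow> nat list \<Rightarrow> bool" where
  "order_iso xs ys \<longleftrightarrow> length xs = length ys \<and>
     (\<forall>j < length xs. \<forall>k < length xs. xs ! j < xs ! k \<longleftrightarrow> ys ! j < ys ! k)"

definition contains :: "nat list \<Rightarrow> nat list \<Rightarrow> bool" (infix "\<preceq>\<^sub>p" 50) where
  "sigma \<preceq>\<^sub>p pi \<longleftrightarrow> (\<exists>I. I \<subseteq> {0..<length pi} \<and> order_iso sigma (nths pi I))"

text \<open>Moebius function of the permutation poset. For permutations z, b with z \<le> b,
  z < b holds iff length z < length b.\<close>
function mu :: "nat list \<Rightarrow> nat list \<Rightarrow> int" where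
  "mu a b = (if a = b then 1
             else if a \<preceq>\<^sub>p b then
               - (\<Sum>z \<in> {z. is_perm z \<and> length z < length b \<and> a \<preceq>\<^sub>p z \<and> z \<preceq>\<^sub>p b}. mu a z)
             else 0)"
  by auto
termination
  by (relation "measure (\<lambda>(a, b). length b)") auto

definition descents :: "nat list \<Rightarrow> nat set" where
  "descents xs = {d. Suc d < length xs \<and> xs ! d > xs ! Suc d}"

definition adjacencies :: "nat list \<Rightarrow> nat" where
  "adjacencies xs = card {j. Suc j < length xs \<and> xs ! Suc j = xs ! j + 1}"

definition M_perm :: "nat \<Rightarrow> nat list" where
  "M_perm n = filter even [1..<n+1] @ filter odd [1..<n+1]"

definition W_perm :: "nat \<Rightarrow> nat list" where
  "W_perm n = filter odd [1..<n+1] @ filter even [1..<n+1]"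

text \<open>For a permutation with exactly one descent at (0-based) position d, i.e. between
  entries d and d+1: the letter 1 lies before the descent iff its index is \<le> d.\<close>
definition one_before_descent :: "nat list \<Rightarrow> bool" where
  "one_before_descent xs \<longleftrightarrow>
     (\<forall>d \<in> descents xs. \<forall>j < length xs. xs ! j = 1 \<longrightarrow> j \<le> d)"

definition related :: "nat list \<Rightarrow> nat list \<Rightarrow> bool" where
  "related s p \<longleftrightarrow> (one_before_descent s \<longleftrightarrow> one_before_descent p)"

end

theory Submission
  imports Defs "HOL-Library.Sublist"
begin

(* M_n and W_n are two-block permutations blocks c [1..n] -- the letters satisfying
   c in increasing order, followed by the others in increasing order -- for an alternating
   predicate c (even, resp. odd).  Every permutation below such a permutation is again of the form
   blocks q [1..k], and when it is unsorted its occurrences in blocks c [1..n] correspond exactly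
   to the occurrences of its bit word q(1)...q(k) as a subword of the alternating word
   c(1)...c(n).  This reduces all pattern questions to subwords of an alternating binary word. *)

section \<open>Pattern containment\<close>

lemma nths_restrict: "nths xs I = nths xs (I \<inter> {0..<length xs})"
  unfolding nths_def
  by (rule arg_cong[where f="map fst"], rule filter_cong) (auto dest: set_zip_rightD)

lemma contains_subseq: "a \<preceq>\<^sub>p b \<longleftrightarrow> (\<exists>ys. subseq ys b \<and> order_iso a ys)"
  unfolding contains_def subseq_conv_nths
  by (metis inf_le2 nths_restrict)

lemma order_iso_refl: "order_iso xs xs"
  by (simp add: order_iso_def)

lemma order_iso_sym: "order_iso xs ys \<Longrightarrow> order_iso ys xs"
  by (simp add: order_iso_def)

lemma order_iso_trans: "order_iso xs ys \<Longrightarrow> order_iso ys zs \<Longrightarrow> order_iso xs zs"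
  by (simp add: order_iso_def)

lemma order_iso_length: "order_iso xs ys \<Longrightarrow> length xs = length ys"
  by (simp add: order_iso_def)

lemma nths_as_map: "nths xs I = map ((!) xs) (filter (\<lambda>i. i \<in> I) [0..<length xs])"
proof -
  have "zip xs [0..<length xs] = map (\<lambda>i. (xs!i, i)) [0..<length xs]"
    by (rule nth_equalityI) simp_all
  then show ?thesis unfolding nths_def by (simp add: filter_map comp_def)
qed

lemma order_iso_map:
  assumes "\<And>j k. j \<in> set ks \<Longrightarrow> k \<in> set ks \<Longrightarrow> (f j < (f k::nat)) = (g j < (g k::nat))"
  shows "order_iso (map f ks) (map g ks)"
  unfolding order_iso_def using assms by (simp add: nth_mem)

lemma order_iso_nths:
  assumes "order_iso xs ys"
  shows "order_iso (nths xs I) (nths ys I)"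
proof -
  have len: "length xs = length ys" using assms by (rule order_iso_length)
  show ?thesis
    unfolding nths_as_map len
  proof (rule order_iso_map)
    fix j k assume "j \<in> set (filter (\<lambda>i. i \<in> I) [0..<length ys])"
      "k \<in> set (filter (\<lambda>i. i \<in> I) [0..<length ys])"
    then show "(xs ! j < xs ! k) = (ys ! j < ys ! k)"
      using assms len unfolding order_iso_def by auto
  qed
qed

lemma order_iso_subseq:
  assumes "order_iso xs ys" "subseq xs' xs"
  shows "\<exists>ys'. subseq ys' ys \<and> order_iso xs' ys'"
proof -
  from assms(2) obtain N where "xs' = nths xs N" by (auto simp: subseq_conv_nths)
  then show ?thesis using order_iso_nths[OF assms(1), of N]
    by (auto simp: subseq_conv_nths)
qed

lemma contains_trans: "a \<preceq>\<^sub>p b \<Longrightarrow> b \<preceq>\<^sub>p c \<Longrightarrow> a \<preceq>\<^sub>p c"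
  unfolding contains_subseq
  by (metis order_iso_subseq order_iso_trans subseq_order.order_trans)

lemma contains_iso_right: "a \<preceq>\<^sub>p b \<Longrightarrow> order_iso b c \<Longrightarrow> a \<preceq>\<^sub>p c"
  unfolding contains_subseq
  by (metis order_iso_subseq order_iso_trans)

lemma contains_refl: "a \<preceq>\<^sub>p a"
  unfolding contains_subseq using order_iso_refl by blast

lemma contains_length: "a \<preceq>\<^sub>p b \<Longrightarrow> length a \<le> length b"
  unfolding contains_subseq by (metis list_emb_length order_iso_length)

lemma order_iso_distinct: "order_iso x y \<Longrightarrow> distinct x \<Longrightarrow> distinct y"
  unfolding distinct_conv_nth order_iso_def by (metis nat_neq_iff)

lemma order_iso_sorted: "order_iso x y \<Longrightarrow> sorted x \<Longrightarrow> sorted y"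
  unfolding sorted_iff_nth_mono order_iso_def by (metis le_less_trans not_le)

lemma subseq_sorted_wrt: "subseq xs ys \<Longrightarrow> sorted_wrt P ys \<Longrightarrow> sorted_wrt P xs"
  by (induction rule: list_emb.induct) (auto dest: list_emb_set)

lemma contains_not_sorted: "s \<preceq>\<^sub>p a \<Longrightarrow> \<not> sorted s \<Longrightarrow> \<not> sorted a"
  unfolding contains_subseq
  by (metis order_iso_sorted order_iso_sym subseq_sorted_wrt)

lemma rank_strict_mono:
  fixes v w :: nat
  assumes "finite S" "v \<in> S" "v < w"
  shows "card {u\<in>S. u < v} < card {u\<in>S. u < w}"
proof (rule psubset_card_mono)
  show "{u\<in>S. u < v} \<subset> {u\<in>S. u < w}" using assms by auto
qed (use assms in auto)

lemma rank_inj: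
  fixes v w :: nat
  assumes "finite S" "v \<in> S" "w \<in> S" "card {u\<in>S. u < v} = card {u\<in>S. u < w}"
  shows "v = w"
  using rank_strict_mono[OF assms(1,2), of w] rank_strict_mono[OF assms(1,3), of v] assms(4)
  by (cases v w rule: linorder_cases) auto

lemma card_less_nth:
  assumes "distinct y" "j < length y"
  shows "card {k. k < length y \<and> y!k < y!j} = card {v \<in> set y. v < y!j}"
proof -
  have "{v \<in> set y. v < y!j} = (!) y ` {k. k < length y \<and> y!k < y!j}"
    by (auto simp: in_set_conv_nth)
  moreover have "inj_on ((!) y) {k. k < length y \<and> y!k < y!j}"
    using inj_on_nth[OF assms(1)] by auto
  ultimately show ?thesis by (simp add: card_image)
qed

text \<open>Two distinct lists with the same elements in the same relative order coincide:
  corresponding entries have the same rank in the common set of values.\<close>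
lemma iso_same_set_eq:
  assumes "order_iso y z" "distinct y" "distinct z" "set y = set z"
  shows "y = z"
proof (rule nth_equalityI)
  show len: "length y = length z" using assms(1) by (rule order_iso_length)
  fix j assume j: "j < length y"
  have iso: "\<forall>j<length y. \<forall>k<length y. (y!j < y!k) = (z!j < z!k)"
    using assms(1) unfolding order_iso_def by simp
  have "card {v \<in> set y. v < y!j} = card {k. k < length y \<and> y!k < y!j}"
    using card_less_nth[OF assms(2) j] by simp
  also have "{k. k < length y \<and> y!k < y!j} = {k. k < length z \<and> z!k < z!j}"
  proof (rule Collect_cong)
    fix k show "(k < length y \<and> y!k < y!j) = (k < length z \<and> z!k < z!j)"
      using iso j len by (cases "k < length y") auto
  qed
  also have "card \<dots> = card {v \<in> set z. v < z!j}"
    using card_less_nth[OF assms(3)] j len by simp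
  finally have "card {v \<in> set y. v < y!j} = card {v \<in> set y. v < z!j}"
    using assms(4) by (simp only:)
  moreover have "y!j \<in> set y" using j by simp
  moreover have "z!j \<in> set y" unfolding assms(4) using j len by simp
  ultimately show "y!j = z!j" using rank_inj[of "set y" "y!j" "z!j"] by simp
qed

lemma perm_iso_eq: "is_perm p \<Longrightarrow> is_perm q \<Longrightarrow> order_iso p q \<Longrightarrow> p = q"
  unfolding is_perm_def
  by (metis iso_same_set_eq order_iso_length)

text \<open>Every list of distinct numbers is order-isomorphic to a permutation (its standardization):
  replace each entry by its rank.\<close>
lemma standardization_exists:
  fixes y :: "nat list"
  assumes "distinct y"
  shows "\<exists>x. is_perm x \<and> order_iso x y"
proof -
  define r where "r v = card {u \<in> set y. u \<le> v}" for v
  define x where "x = map r y"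
  have mono: "r v < r w \<longleftrightarrow> v < w" if "v \<in> set y" "w \<in> set y" for v w
  proof
    assume "v < w"
    have w: "w \<in> {u \<in> set y. u \<le> w}" "w \<notin> {u \<in> set y. u \<le> v}" using that \<open>v < w\<close> by auto
    have "{u \<in> set y. u \<le> v} \<subset> {u \<in> set y. u \<le> w}"
    proof (rule psubsetI)
      show "{u \<in> set y. u \<le> v} \<subseteq> {u \<in> set y. u \<le> w}" using \<open>v < w\<close> by auto
      show "{u \<in> set y. u \<le> v} \<noteq> {u \<in> set y. u \<le> w}" using w by blast
    qed
    then show "r v < r w" unfolding r_def by (rule psubset_card_mono[rotated]) auto
  next
    assume "r v < r w"
    show "v < w"
    proof (rule ccontr)
      assume "\<not> v < w"
      then have "{u \<in> set y. u \<le> w} \<subseteq> {u \<in> set y. u \<le> v}" by auto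
      then have "r w \<le> r v" unfolding r_def by (rule card_mono[rotated]) auto
      then show False using \<open>r v < r w\<close> by simp
    qed
  qed
  have iso: "order_iso x y"
    unfolding x_def order_iso_def using mono by (auto simp: nth_mem)
  have dist: "distinct x" using order_iso_distinct[OF order_iso_sym[OF iso] assms] .
  have sub: "set x \<subseteq> {1..length x}"
  proof
    fix a assume "a \<in> set x"
    then obtain v where v: "v \<in> set y" "a = r v" unfolding x_def by auto
    then have "0 < r v" unfolding r_def by (subst card_gt_0_iff) auto
    moreover have "r v \<le> card (set y)" unfolding r_def by (rule card_mono) auto
    ultimately show "a \<in> {1..length x}" using v distinct_card[OF assms] by (simp add: x_def)
  qed
  have "set x = {1..length x}"
    using card_subset_eq[OF _ sub] distinct_card[OF dist] by simp
  then show ?thesis using dist iso unfolding is_perm_def by blast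
qed

lemma perm_contains_eq:
  assumes "is_perm z" "is_perm b" "z \<preceq>\<^sub>p b" "length z = length b"
  shows "z = b"
proof -
  obtain ys where ys: "subseq ys b" "order_iso z ys" using assms(3) by (auto simp: contains_subseq)
  have "length ys = length b" using order_iso_length[OF ys(2)] assms(4) by simp
  then have "ys = b" using subseq_same_length[OF ys(1)] by simp
  then show ?thesis using perm_iso_eq[OF assms(1,2)] ys(2) by simp
qed

section \<open>Moebius inversion in the permutation poset\<close>

declare mu.simps [simp del]

definition perm_interval :: "nat list \<Rightarrow> nat list \<Rightarrow> nat list set" where
  "perm_interval a b = {z. is_perm z \<and> a \<preceq>\<^sub>p z \<and> z \<preceq>\<^sub>p b}"

lemma finite_perm_interval: "finite (perm_interval a b)"
proof (rule finite_subset)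
  show "perm_interval a b \<subseteq> {xs. set xs \<subseteq> {1..length b} \<and> length xs \<le> length b}"
  proof
    fix z assume "z \<in> perm_interval a b"
    then have "is_perm z" "length z \<le> length b"
      using contains_length unfolding perm_interval_def by auto
    then show "z \<in> {xs. set xs \<subseteq> {1..length b} \<and> length xs \<le> length b}"
      unfolding is_perm_def by auto
  qed
  show "finite {xs. set xs \<subseteq> {1..length b} \<and> length xs \<le> length b}"
    by (rule finite_lists_length_le) simp
qed

lemma perm_interval_top:
  assumes "is_perm b" "z \<in> perm_interval a b"
  shows "length z < length b \<longleftrightarrow> z \<noteq> b"
proof -
  have "is_perm z" "z \<preceq>\<^sub>p b" using assms(2) unfolding perm_interval_def by auto
  then show ?thesis
    using perm_contains_eq[of z b] assms(1) contains_length[of z b] by (auto simp: le_less)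
qed

lemma perm_interval_strict:
  assumes "is_perm b"
  shows "{z. is_perm z \<and> length z < length b \<and> a \<preceq>\<^sub>p z \<and> z \<preceq>\<^sub>p b} = perm_interval a b - {b}"
proof -
  have "z \<in> perm_interval a b \<and> length z < length b \<longleftrightarrow> z \<in> perm_interval a b - {b}" for z
    using perm_interval_top[OF assms, of z a] by auto
  then show ?thesis unfolding perm_interval_def by blast
qed

lemma mu_sum:
  assumes "is_perm a" "is_perm b" "a \<preceq>\<^sub>p b"
  shows "(\<Sum>z\<in>perm_interval a b. mu a z) = (if a = b then 1 else 0)"
proof -
  have b: "b \<in> perm_interval a b" using assms contains_refl unfolding perm_interval_def by auto
  show ?thesis
  proof (cases "a = b")
    case True
    have "perm_interval a b - {b} = {z. is_perm z \<and> length z < length b \<and> a \<preceq>\<^sub>p z \<and> z \<preceq>\<^sub>p b}"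
      by (rule perm_interval_strict[symmetric]) (rule assms(2))
    also have "\<dots> = {}" using True by (auto dest!: contains_length)
    finally have "perm_interval a b = {b}" using b by auto
    then show ?thesis using True by (simp add: mu.simps[of b b])
  next
    case False
    have "mu a b = - (\<Sum>z \<in> perm_interval a b - {b}. mu a z)"
      using False assms(3) perm_interval_strict[OF assms(2), of a] by (subst mu.simps) simp
    then show ?thesis using False b finite_perm_interval by (simp add: sum.remove)
  qed
qed

lemma mobius_inversion:
  fixes f :: "nat list \<Rightarrow> int"
  assumes s: "is_perm s" and p: "is_perm p" and sp: "s \<preceq>\<^sub>p p"
    and H: "\<And>a. a \<in> perm_interval s p \<Longrightarrow> (\<Sum>z\<in>perm_interval a p. f z) = (if a = p then 1 else 0)"
  shows "mu s p = f s"
proof -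
  define J where "J = perm_interval s p"
  have fin: "finite J" unfolding J_def by (rule finite_perm_interval)
  have pJ: "p \<in> J" "s \<in> J" unfolding J_def perm_interval_def using s p sp contains_refl by auto
  have above: "perm_interval z p = {y \<in> J. z \<preceq>\<^sub>p y}" if "z \<in> J" for z
    using that unfolding J_def perm_interval_def by (auto intro: contains_trans)
  have below: "perm_interval s y = {z \<in> J. z \<preceq>\<^sub>p y}" if "y \<in> J" for y
    using that unfolding J_def perm_interval_def by (auto intro: contains_trans)
  have "mu s p = (\<Sum>z\<in>J. mu s z * (if z = p then 1 else 0))"
    using fin pJ by (simp add: if_distrib cong: if_cong)
  also have "\<dots> = (\<Sum>z\<in>J. \<Sum>y\<in>{y \<in> J. z \<preceq>\<^sub>p y}. mu s z * f y)"
  proof (rule sum.cong[OF refl])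
    fix z assume "z \<in> J"
    then show "mu s z * (if z = p then 1 else 0) = (\<Sum>y\<in>{y \<in> J. z \<preceq>\<^sub>p y}. mu s z * f y)"
      using H[of z] above[of z] unfolding J_def by (simp add: sum_distrib_left[symmetric])
  qed
  also have "\<dots> = (\<Sum>y\<in>J. \<Sum>z\<in>{z \<in> J. z \<preceq>\<^sub>p y}. mu s z * f y)"
    by (rule sum.swap_restrict[OF fin fin])
  also have "\<dots> = (\<Sum>y\<in>J. f y * (\<Sum>z\<in>perm_interval s y. mu s z))"
    using below by (simp add: sum_distrib_left mult.commute)
  also have "\<dots> = (\<Sum>y\<in>J. f y * (if s = y then 1 else 0))"
    using mu_sum[OF s] unfolding J_def perm_interval_def by (intro sum.cong) auto
  also have "\<dots> = f s" using fin pJ by (simp add: if_distrib cong: if_cong)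
  finally show ?thesis .
qed

definition occurrences :: "nat list \<Rightarrow> nat list \<Rightarrow> int" where
  "occurrences z p = sum_list (map (\<lambda>ys. if order_iso z ys then 1 else 0) (subseqs p))"

lemma sum_swap_list:
  "(\<Sum>z\<in>Z. sum_list (map (g z) xs)) = sum_list (map (\<lambda>x. \<Sum>z\<in>Z. g z x) xs)"
  by (induction xs) (simp_all add: sum.distrib)

text \<open>Summing occurrence counts over an interval [a, p] amounts to summing over the subsequences
  of p that contain a, since every subsequence standardizes to exactly one permutation.\<close>
lemma weighted_occurrences_sum:
  fixes w :: "nat \<Rightarrow> int"
  assumes dp: "distinct p"
  shows "(\<Sum>z\<in>perm_interval a p. w (length z) * occurrences z p)
       = sum_list (map (\<lambda>ys. if a \<preceq>\<^sub>p ys then w (length ys) else 0) (subseqs p))"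
proof -
  define Z where "Z = perm_interval a p"
  have "(\<Sum>z\<in>Z. w (length z) * occurrences z p)
      = sum_list (map (\<lambda>ys. \<Sum>z\<in>Z. if order_iso z ys then w (length z) else 0) (subseqs p))"
    unfolding occurrences_def sum_swap_list[symmetric]
    by (simp add: sum_list_const_mult[symmetric] if_distrib cong: if_cong)
  also have "\<dots> = sum_list (map (\<lambda>ys. if a \<preceq>\<^sub>p ys then w (length ys) else 0) (subseqs p))"
  proof (rule arg_cong[where f=sum_list], rule map_cong[OF refl])
    fix ys assume ys: "ys \<in> set (subseqs p)"
    obtain x where x: "is_perm x" "order_iso x ys"
      using standardization_exists[OF subseqs_distinctD[OF ys dp]] by blast
    have unique: "{z\<in>Z. order_iso z ys} \<subseteq> {x}"
      using x perm_iso_eq order_iso_trans order_iso_sym unfolding Z_def perm_interval_def by blast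
    have "{z\<in>Z. order_iso z ys} = (if a \<preceq>\<^sub>p ys then {x} else {})"
    proof (cases "a \<preceq>\<^sub>p ys")
      case True
      have "a \<preceq>\<^sub>p x" using contains_iso_right[OF True order_iso_sym[OF x(2)]] .
      moreover have "x \<preceq>\<^sub>p p" using ys x(2) unfolding contains_subseq by auto
      ultimately show ?thesis using True unique x unfolding Z_def perm_interval_def by auto
    next
      case False
      then show ?thesis using contains_iso_right unfolding Z_def perm_interval_def by auto
    qed
    moreover have "(\<Sum>z\<in>Z. if order_iso z ys then w (length z) else 0) =
        (\<Sum>z\<in>{z\<in>Z. order_iso z ys}. w (length z))"
      by (rule sum.inter_filter[symmetric]) (simp add: Z_def finite_perm_interval)
    ultimately show "(\<Sum>z\<in>Z. if order_iso z ys then w (length z) else 0) =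
        (if a \<preceq>\<^sub>p ys then w (length ys) else 0)"
      using order_iso_length[OF x(2)] by simp
  qed
  finally show ?thesis unfolding Z_def .
qed

lemma mu_signed_occurrences:
  assumes s: "is_perm s" and p: "is_perm p" and sp: "s \<preceq>\<^sub>p p"
    and delta: "\<And>a. a \<in> perm_interval s p \<Longrightarrow>
       sum_list (map (\<lambda>ys. if a \<preceq>\<^sub>p ys then (-1::int) ^ (length p - length ys) else 0) (subseqs p))
         = (if a = p then 1 else 0)"
  shows "mu s p = (-1) ^ (length p - length s) * occurrences s p"
proof (rule mobius_inversion[OF s p sp])
  fix a assume a: "a \<in> perm_interval s p"
  have "distinct p" using p unfolding is_perm_def by simp
  from trans[OF weighted_occurrences_sum[OF this, of "\<lambda>k. (-1) ^ (length p - k)" a] delta[OF a]]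
  show "(\<Sum>z\<in>perm_interval a p. (-1) ^ (length p - length z) * occurrences z p) =
      (if a = p then 1 else 0)" .
qed

section \<open>Two-block permutations\<close>

text \<open>The entries of xs satisfying c, followed by the remaining ones.  For xs = [1..n] this
  yields the permutations with at most one descent; M_n and W_n are the cases c = even, c = odd.\<close>
definition blocks :: "(nat \<Rightarrow> bool) \<Rightarrow> nat list \<Rightarrow> nat list" where
  "blocks c xs = filter c xs @ filter (\<lambda>x. \<not> c x) xs"

lemma length_blocks[simp]: "length (blocks c xs) = length xs"
  unfolding blocks_def by (simp add: sum_length_filter_compl)

lemma set_blocks[simp]: "set (blocks c xs) = set xs"
  unfolding blocks_def by auto

lemma distinct_blocks: "distinct xs \<Longrightarrow> distinct (blocks c xs)"
  unfolding blocks_def by auto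

lemma is_perm_blocks: "is_perm (blocks q [1..<m+1])"
  unfolding is_perm_def by (auto simp: distinct_blocks)

lemma sorted_filter_upt: "sorted (filter P [a..<b])"
  by (simp add: sorted_wrt_filter)

lemma sorted_wrt_filter_upt: "sorted_wrt (<) (filter P [a..<b])"
  by (simp add: sorted_wrt_filter)

lemma sum_subseqs_append:
  fixes g :: "'a list \<Rightarrow> 'b::comm_monoid_add"
  shows "sum_list (map g (subseqs (xs @ ys))) =
    sum_list (map (\<lambda>as. sum_list (map (\<lambda>bs. g (as @ bs)) (subseqs ys))) (subseqs xs))"
proof (induction xs arbitrary: g)
  case Nil
  then show ?case by simp
next
  case (Cons x xs)
  have "sum_list (map g (subseqs ((x # xs) @ ys))) =
     sum_list (map (\<lambda>zs. g (x # zs)) (subseqs (xs @ ys))) + sum_list (map g (subseqs (xs @ ys)))"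
    by (simp add: Let_def comp_def)
  also have "\<dots> = sum_list (map (\<lambda>as. sum_list (map (\<lambda>bs. g (x # as @ bs)) (subseqs ys))) (subseqs xs))
     + sum_list (map (\<lambda>as. sum_list (map (\<lambda>bs. g (as @ bs)) (subseqs ys))) (subseqs xs))"
    using Cons.IH[of "\<lambda>zs. g (x # zs)"] Cons.IH[of g] by simp
  also have "\<dots> = sum_list (map (\<lambda>as. sum_list (map (\<lambda>bs. g (as @ bs)) (subseqs ys))) (subseqs (x # xs)))"
    by (simp add: Let_def comp_def)
  finally show ?case .
qed

lemma sum_subseqs_split:
  fixes g :: "'a list \<Rightarrow> 'a list \<Rightarrow> 'b::comm_monoid_add"
  shows "sum_list (map (\<lambda>ws. g (filter c ws) (filter (\<lambda>x. \<not> c x) ws)) (subseqs vs)) =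
    sum_list (map (\<lambda>as. sum_list (map (\<lambda>bs. g as bs) (subseqs (filter (\<lambda>x. \<not> c x) vs))))
      (subseqs (filter c vs)))"
proof (induction vs arbitrary: g)
  case Nil
  then show ?case by simp
next
  case (Cons v vs)
  show ?case
  proof (cases "c v")
    case True
    have "sum_list (map (\<lambda>ws. g (filter c ws) (filter (\<lambda>x. \<not> c x) ws)) (subseqs (v # vs))) =
      sum_list (map (\<lambda>ws. g (v # filter c ws) (filter (\<lambda>x. \<not> c x) ws)) (subseqs vs)) +
      sum_list (map (\<lambda>ws. g (filter c ws) (filter (\<lambda>x. \<not> c x) ws)) (subseqs vs))"
      using True by (simp add: Let_def comp_def)
    also have "\<dots> = sum_list (map (\<lambda>as. sum_list (map (\<lambda>bs. g as bs) (subseqs (filter (\<lambda>x. \<not> c x) (v # vs)))))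
      (subseqs (filter c (v # vs))))"
      using True Cons.IH[of "\<lambda>as bs. g (v # as) bs"] Cons.IH[of g] by (simp add: Let_def comp_def)
    finally show ?thesis .
  next
    case False
    have "sum_list (map (\<lambda>ws. g (filter c ws) (filter (\<lambda>x. \<not> c x) ws)) (subseqs (v # vs))) =
      sum_list (map (\<lambda>ws. g (filter c ws) (v # filter (\<lambda>x. \<not> c x) ws)) (subseqs vs)) +
      sum_list (map (\<lambda>ws. g (filter c ws) (filter (\<lambda>x. \<not> c x) ws)) (subseqs vs))"
      using False by (simp add: Let_def comp_def)
    also have "\<dots> = sum_list (map (\<lambda>as. sum_list (map (\<lambda>bs. g as (v # bs)) (subseqs (filter (\<lambda>x. \<not> c x) vs))))
      (subseqs (filter c vs))) +
      sum_list (map (\<lambda>as. sum_list (map (\<lambda>bs. g as bs) (subseqs (filter (\<lambda>x. \<not> c x) vs))))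
      (subseqs (filter c vs)))"
      using Cons.IH[of "\<lambda>as bs. g as (v # bs)"] Cons.IH[of g] by simp
    also have "\<dots> = sum_list (map (\<lambda>as. sum_list (map (\<lambda>bs. g as bs) (subseqs (filter (\<lambda>x. \<not> c x) (v # vs)))))
      (subseqs (filter c (v # vs))))"
      using False by (simp add: Let_def comp_def sum_list_addf[symmetric])
    finally show ?thesis .
  qed
qed

lemma sum_subseqs_blocks:
  fixes g :: "nat list \<Rightarrow> 'b::comm_monoid_add"
  shows "sum_list (map g (subseqs (blocks c vs))) = sum_list (map (\<lambda>ws. g (blocks c ws)) (subseqs vs))"
  unfolding blocks_def sum_subseqs_append
  using sum_subseqs_split[of "\<lambda>as bs. g (as @ bs)" c vs] by simp

lemma subseqs_map: "subseqs (map f xs) = map (map f) (subseqs xs)"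
  by (induction xs) (simp_all add: Let_def comp_def)

lemma subseq_Cons_right_cases:
  assumes "subseq X (w # L)"
  obtains "subseq X L" | X' where "X = w # X'" "subseq X' L"
  using assms by (cases X) (auto split: if_splits)

lemma subseq_merge:
  assumes "subseq A (filter c ws)" "subseq B (filter (\<lambda>x. \<not> c x) ws)"
  shows "\<exists>us. subseq us ws \<and> filter c us = A \<and> filter (\<lambda>x. \<not> c x) us = B"
  using assms
proof (induction ws arbitrary: A B)
  case Nil
  then show ?case using list_emb_Nil2 by fastforce
next
  case (Cons w ws)
  show ?case
  proof (cases "c w")
    case True
    then have B: "subseq B (filter (\<lambda>x. \<not> c x) ws)" using Cons.prems by simp
    have "subseq A (w # filter c ws)" using Cons.prems True by simp
    then show ?thesis
    proof (cases rule: subseq_Cons_right_cases)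
      case 1
      then obtain us where "subseq us ws" "filter c us = A" "filter (\<lambda>x. \<not> c x) us = B"
        using Cons.IH[OF _ B] by blast
      then show ?thesis by (intro exI[of _ us]) auto
    next
      case (2 A')
      then obtain us where "subseq us ws" "filter c us = A'" "filter (\<lambda>x. \<not> c x) us = B"
        using Cons.IH[OF _ B] by blast
      then show ?thesis using True 2 by (intro exI[of _ "w # us"]) auto
    qed
  next
    case False
    then have A: "subseq A (filter c ws)" using Cons.prems by simp
    have "subseq B (w # filter (\<lambda>x. \<not> c x) ws)" using Cons.prems False by simp
    then show ?thesis
    proof (cases rule: subseq_Cons_right_cases)
      case 1
      then obtain us where "subseq us ws" "filter c us = A" "filter (\<lambda>x. \<not> c x) us = B"
        using Cons.IH[OF A] by blast
      then show ?thesis by (intro exI[of _ us]) auto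
    next
      case (2 B')
      then obtain us where "subseq us ws" "filter c us = A" "filter (\<lambda>x. \<not> c x) us = B'"
        using Cons.IH[OF A] by blast
      then show ?thesis using False 2 by (intro exI[of _ "w # us"]) auto
    qed
  qed
qed

lemma subseq_blocks:
  assumes "subseq ys (blocks c ws)"
  shows "\<exists>us. subseq us ws \<and> ys = blocks c us"
proof -
  from assms obtain A B where "ys = A @ B" "subseq A (filter c ws)" "subseq B (filter (\<lambda>x. \<not> c x) ws)"
    unfolding blocks_def by (auto elim: subseq_appendE)
  then show ?thesis using subseq_merge[of A c ws B] unfolding blocks_def by auto
qed

lemma subseq_blocks_mono: "subseq us ws \<Longrightarrow> subseq (blocks c us) (blocks c ws)"
  unfolding blocks_def by (intro list_emb_append_mono subseq_filter)

lemma subseq_map_ex: "subseq u (map f ws) \<Longrightarrow> \<exists>us. subseq us ws \<and> u = map f us"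
  by (auto simp: subseq_conv_nths nths_map)

lemma sorted_decomp_unique:
  fixes A B A' B' :: "nat list"
  assumes "sorted A" "sorted B" "sorted A'" "sorted B'" "A @ B = A' @ B'" "\<not> sorted (A @ B)"
  shows "A = A'"
proof -
  from assms(5) obtain us where
    us: "(A = A' @ us \<and> us @ B = B') \<or> (A @ us = A' \<and> B = us @ B')"
    by (auto simp: append_eq_append_conv2)
  show ?thesis
  proof (cases "us = []")
    case True
    then show ?thesis using us by auto
  next
    case False
    then obtain u where u: "u \<in> set us" by (cases us) auto
    from us show ?thesis
    proof
      assume h: "A = A' @ us \<and> us @ B = B'"
      have s1: "sorted (A' @ us)" "sorted (us @ B)" using assms(1,4) h by auto
      have f: "sorted A'" "sorted us" "sorted B" "\<forall>x\<in>set A'. \<forall>y\<in>set us. x \<le> y"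
        "\<forall>x\<in>set us. \<forall>y\<in>set B. x \<le> y" using s1 by (simp_all add: sorted_append)
      have "\<forall>x\<in>set A'. \<forall>y\<in>set B. x \<le> y" using f(4,5) u by (meson order_trans)
      then have "sorted (A' @ us @ B)"
        using f by (auto simp add: sorted_append)
      then show ?thesis using assms(6) h by simp
    next
      assume h: "A @ us = A' \<and> B = us @ B'"
      have s1: "sorted (A @ us)" "sorted (us @ B')" using assms(2,3) h by auto
      have f: "sorted A" "sorted us" "sorted B'" "\<forall>x\<in>set A. \<forall>y\<in>set us. x \<le> y"
        "\<forall>x\<in>set us. \<forall>y\<in>set B'. x \<le> y" using s1 by (simp_all add: sorted_append)
      have "\<forall>x\<in>set A. \<forall>y\<in>set B'. x \<le> y" using f(4,5) u by (meson order_trans)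
      then have "sorted (A @ us @ B')"
        using f by (auto simp add: sorted_append)
      then show ?thesis using assms(6) h by simp
    qed
  qed
qed

lemma iso_map_mono:
  fixes h :: "nat \<Rightarrow> nat"
  assumes "\<And>x y. x \<in> set xs \<Longrightarrow> y \<in> set xs \<Longrightarrow> x < y \<Longrightarrow> h x < h y"
  shows "order_iso xs (map h xs)"
  unfolding order_iso_def
proof (intro conjI allI impI)
  fix j k assume jk: "j < length xs" "k < length xs"
  then have m: "xs!j \<in> set xs" "xs!k \<in> set xs" by auto
  show "(xs!j < xs!k) = (map h xs ! j < map h xs ! k)"
  proof
    assume "xs!j < xs!k" then show "map h xs ! j < map h xs ! k" using assms m jk by simp
  next
    assume a: "map h xs ! j < map h xs ! k"
    show "xs!j < xs!k"
    proof (rule ccontr)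
      assume "\<not> xs!j < xs!k"
      then have "xs!k < xs!j \<or> xs!k = xs!j" by auto
      then have "h (xs!k) < h (xs!j) \<or> h (xs!k) = h (xs!j)" using assms m by auto
      then show False using a jk by auto
    qed
  qed
qed simp

lemma map_nth_upt_shift: "map (\<lambda>k. xs!(k-1)) [1..<length xs+1] = xs"
  by (rule nth_equalityI) (simp_all del: upt_Suc)

text \<open>For increasing ws, blocks c ws is the image of the two-block permutation with bit word c(ws)
  under the increasing map k \<mapsto> ws!(k-1), hence order-isomorphic to it.\<close>
lemma blocks_iso_sorted:
  assumes "sorted_wrt (<) ws"
  shows "order_iso (blocks (\<lambda>k. c (ws!(k-1))) [1..<length ws+1]) (blocks c ws)"
proof -
  define h where "h = (\<lambda>k. ws!(k-1))"
  define b where "b = blocks (\<lambda>k. c (h k)) [1..<length ws+1]"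
  have "blocks c ws = map h b"
    unfolding b_def h_def
    by (subst (1) map_nth_upt_shift[symmetric]) (simp add: blocks_def filter_map comp_def)
  moreover have "order_iso b (map h b)"
  proof (rule iso_map_mono)
    fix x y assume "x \<in> set b" "y \<in> set b" "x < y"
    then have "x - 1 < y - 1" "y - 1 < length ws" unfolding b_def by auto
    then show "h x < h y" using assms unfolding h_def sorted_wrt_iff_nth_less by blast
  qed
  ultimately show ?thesis unfolding b_def h_def by simp
qed

lemma blocks_eq_iff:
  assumes "\<not> sorted (blocks q [1..<m+1])"
  shows "blocks q [1..<m+1] = blocks p [1..<m+1] \<longleftrightarrow> map q [1..<m+1] = map p [1..<m+1]"
proof
  assume "blocks q [1..<m+1] = blocks p [1..<m+1]"
  then have eq: "filter q [1..<m+1] = filter p [1..<m+1]"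
    using sorted_decomp_unique[OF sorted_filter_upt sorted_filter_upt sorted_filter_upt sorted_filter_upt]
      assms unfolding blocks_def by metis
  have "q k = p k" if "k \<in> set [1..<m+1]" for k
  proof -
    have "k \<in> set (filter q [1..<m+1]) \<longleftrightarrow> k \<in> set (filter p [1..<m+1])" using eq by simp
    then show ?thesis using that by simp
  qed
  then show "map q [1..<m+1] = map p [1..<m+1]" by (simp del: upt_Suc)
next
  assume "map q [1..<m+1] = map p [1..<m+1]"
  then have agree: "\<forall>k\<in>set [1..<m+1]. q k = p k" by (simp only: map_eq_conv)
  have "filter q [1..<m+1] = filter p [1..<m+1]"
    by (rule filter_cong) (use agree in auto)
  moreover have "filter (\<lambda>x. \<not> q x) [1..<m+1] = filter (\<lambda>x. \<not> p x) [1..<m+1]"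
    by (rule filter_cong) (use agree in auto)
  ultimately show "blocks q [1..<m+1] = blocks p [1..<m+1]" unfolding blocks_def by simp
qed

lemma iso_blocks_iff:
  assumes a: "a = blocks q [1..<m+1]" and ns: "\<not> sorted a" and ws: "sorted_wrt (<) ws"
  shows "order_iso a (blocks c ws) \<longleftrightarrow> map q [1..<m+1] = map c ws"
proof -
  define p where "p = (\<lambda>k. c (ws!(k-1)))"
  have iso: "order_iso (blocks p [1..<length ws+1]) (blocks c ws)"
    unfolding p_def by (rule blocks_iso_sorted[OF ws])
  have "order_iso a (blocks c ws) \<longleftrightarrow> length ws = m \<and> a = blocks p [1..<m+1]"
  proof
    assume a_iso: "order_iso a (blocks c ws)"
    then have len: "length ws = m" using order_iso_length[OF a_iso] a by (simp del: upt_Suc)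
    then have "order_iso a (blocks p [1..<m+1])"
      using order_iso_trans[OF a_iso order_iso_sym[OF iso]] by simp
    then show "length ws = m \<and> a = blocks p [1..<m+1]"
      using perm_iso_eq[OF _ is_perm_blocks] a is_perm_blocks len by simp
  qed (use iso in auto)
  also have "\<dots> \<longleftrightarrow> length ws = m \<and> map q [1..<m+1] = map p [1..<m+1]"
    using blocks_eq_iff[of q m p] ns a by auto
  also have "\<dots> \<longleftrightarrow> map q [1..<m+1] = map c ws"
  proof -
    have "map p [1..<length ws+1] = map c (map (\<lambda>k. ws!(k-1)) [1..<length ws+1])"
      unfolding p_def by (simp del: upt_Suc)
    also have "\<dots> = map c ws" by (simp only: map_nth_upt_shift)
    finally have "map p [1..<length ws+1] = map c ws" .
    moreover have "length ws = m" if "map q [1..<m+1] = map c ws"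
      using arg_cong[OF that, of length] by (simp del: upt_Suc)
    ultimately show ?thesis by metis
  qed
  finally show ?thesis .
qed

lemma contains_blocks:
  assumes a: "a = blocks q [1..<m+1]" and ns: "\<not> sorted a" and ws: "sorted_wrt (<) ws"
  shows "a \<preceq>\<^sub>p blocks c ws \<longleftrightarrow> subseq (map q [1..<m+1]) (map c ws)"
proof
  assume "a \<preceq>\<^sub>p blocks c ws"
  then obtain ys where ys: "subseq ys (blocks c ws)" "order_iso a ys" by (auto simp: contains_subseq)
  then obtain us where us: "subseq us ws" "ys = blocks c us" using subseq_blocks by blast
  have "sorted_wrt (<) us" using subseq_sorted_wrt[OF us(1) ws] .
  then have "map q [1..<m+1] = map c us" using iso_blocks_iff[OF a ns] ys us by blast
  then show "subseq (map q [1..<m+1]) (map c ws)" using subseq_map[OF us(1)] by simp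
next
  assume "subseq (map q [1..<m+1]) (map c ws)"
  then obtain us where us: "subseq us ws" "map q [1..<m+1] = map c us" using subseq_map_ex by blast
  have "sorted_wrt (<) us" using subseq_sorted_wrt[OF us(1) ws] .
  then have "order_iso a (blocks c us)" using iso_blocks_iff[OF a ns] us by blast
  then show "a \<preceq>\<^sub>p blocks c ws" using subseq_blocks_mono[OF us(1)] unfolding contains_subseq by blast
qed

lemma below_blocks:
  assumes "is_perm a" "a \<preceq>\<^sub>p blocks c [1..<n+1]"
  shows "\<exists>q. a = blocks q [1..<length a+1]"
proof -
  obtain ys where ys: "subseq ys (blocks c [1..<n+1])" "order_iso a ys"
    using assms(2) by (auto simp: contains_subseq)
  then obtain us where us: "subseq us [1..<n+1]" "ys = blocks c us" using subseq_blocks by blast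
  have s: "sorted_wrt (<) us" using subseq_sorted_wrt[OF us(1) sorted_wrt_upt] .
  have len: "length us = length a" using order_iso_length[OF ys(2)] us by simp
  have "order_iso a (blocks (\<lambda>k. c (us!(k-1))) [1..<length a+1])"
    using order_iso_trans[OF ys(2)[unfolded us(2)] order_iso_sym[OF blocks_iso_sorted[OF s]]] len
    by simp
  then have "a = blocks (\<lambda>k. c (us!(k-1))) [1..<length a+1]"
    using perm_iso_eq[OF assms(1) is_perm_blocks] by simp
  then show ?thesis by blast
qed

lemma in_subseqs_upt_sorted: "ws \<in> set (subseqs [a..<b]) \<Longrightarrow> sorted_wrt (<) ws"
  using subseq_sorted_wrt[of ws "[a..<b]" "(<)"] sorted_wrt_upt by simp

section \<open>Binary words\<close>

fun alt_word :: "bool \<Rightarrow> nat \<Rightarrow> bool list" where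
  "alt_word x 0 = []"
| "alt_word x (Suc n) = x # alt_word (\<not> x) n"

lemma length_alt_word[simp]: "length (alt_word x n) = n"
  by (induction n arbitrary: x) auto

definition alternating :: "(nat \<Rightarrow> bool) \<Rightarrow> bool" where
  "alternating c \<longleftrightarrow> (\<forall>j. c (Suc j) = (\<not> c j))"

lemma map_alt_word:
  assumes "alternating c"
  shows "map c [k..<k+n] = alt_word (c k) n"
proof (induction n arbitrary: k)
  case 0
  then show ?case by simp
next
  case (Suc n)
  have "[k..<k + Suc n] = k # [Suc k..<Suc k + n]" by (simp add: upt_conv_Cons)
  then show ?case using Suc.IH[of "Suc k"] assms unfolding alternating_def by simp
qed

lemma alt_word_hd: "alt_word x n = y # v \<Longrightarrow> y = x"
  by (cases n) auto

text \<open>Induction on w, splitting the subwords by whether they use the first letter of w: if u does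
  not start with that letter the two halves cancel, otherwise only the first half survives.\<close>
lemma alt_word_signed_sum:
  "sum_list (map (\<lambda>bs. if subseq u bs then (-1::int)^length bs else 0) (subseqs (alt_word x n)))
     = (if u = alt_word x n then (-1)^n else 0)"
proof (induction n arbitrary: u x)
  case 0
  then show ?case by (auto dest: list_emb_Nil2)
next
  case (Suc n)
  define S where "S = subseqs (alt_word (\<not> x) n)"
  define N where "N v = sum_list (map (\<lambda>bs. if subseq v bs then (-1::int)^length bs else 0) S)" for v
  have IH: "N v = (if v = alt_word (\<not> x) n then (-1)^n else 0)" for v
    unfolding N_def S_def by (rule Suc.IH)
  have split: "sum_list (map (\<lambda>bs. if subseq u bs then (-1::int)^length bs else 0) (subseqs (alt_word x (Suc n))))
    = sum_list (map (\<lambda>bs. if subseq u (x # bs) then (-1::int)^length (x # bs) else 0) S) + N u"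
    unfolding S_def N_def by (simp add: Let_def comp_def)
  show ?case
  proof (cases u)
    case Nil
    have "sum_list (map (\<lambda>bs. if subseq u (x # bs) then (-1::int)^length (x # bs) else 0) S) = - N u"
      unfolding N_def using Nil by (simp add: uminus_sum_list_map comp_def)
    then show ?thesis using split Nil by simp
  next
    case (Cons y u')
    show ?thesis
    proof (cases "y = x")
      case True
      have "sum_list (map (\<lambda>bs. if subseq u (x # bs) then (-1::int)^length (x # bs) else 0) S) = - N u'"
        unfolding N_def using Cons True by (simp add: uminus_sum_list_map comp_def if_distrib cong: if_cong)
      moreover have "N u = 0" using IH[of u] Cons True alt_word_hd[of "\<not> x" n x u'] by auto
      ultimately show ?thesis using split Cons True IH[of u'] by auto
    next
      case False
      have "sum_list (map (\<lambda>bs. if subseq u (x # bs) then (-1::int)^length (x # bs) else 0) S) = - N u"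
        unfolding N_def using Cons False by (simp add: uminus_sum_list_map comp_def if_distrib cong: if_cong)
      then show ?thesis using split Cons False by simp
    qed
  qed
qed

definition embeddings :: "bool list \<Rightarrow> bool list \<Rightarrow> nat" where
  "embeddings u w = sum_list (map (\<lambda>bs. if bs = u then 1 else 0) (subseqs w))"

lemma embeddings_Nil_right: "embeddings u [] = (if u = [] then 1 else 0)"
  by (simp add: embeddings_def)

lemma embeddings_Cons_right:
  "embeddings u (x # w) =
     (case u of [] \<Rightarrow> 0 | y # u' \<Rightarrow> (if y = x then embeddings u' w else 0)) + embeddings u w"
  by (cases u) (simp_all add: embeddings_def Let_def comp_def)

lemma embeddings_Nil_left: "embeddings [] w = 1"
  by (induction w) (simp_all add: embeddings_Nil_right embeddings_Cons_right)

fun equal_adj :: "bool list \<Rightarrow> nat" where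
  "equal_adj (x # y # xs) = (if x = y then 1 else 0) + equal_adj (y # xs)"
| "equal_adj _ = 0"

lemma equal_adj_le: "equal_adj u \<le> length u - 1"
  by (induction u rule: equal_adj.induct) auto

lemma equal_adj_Cons: "equal_adj (x # L) = (if L \<noteq> [] \<and> hd L = x then 1 else 0) + equal_adj L"
  by (cases L) auto

text \<open>Induction on n; the step is Pascal's rule.\<close>
lemma embeddings_alt_word:
  "u \<noteq> [] \<Longrightarrow> embeddings u (alt_word x n) =
     ((n + length u - equal_adj u - (if hd u = x then 0 else 1)) div 2) choose (length u)"
proof (induction n arbitrary: u x)
  case 0
  have "(length u - equal_adj u - (if hd u = x then 0 else 1)) div 2 < length u"
    using 0 by (cases u) auto
  then show ?case using 0 by (simp add: embeddings_Nil_right)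
next
  case (Suc n)
  obtain y u' where u: "u = y # u'" using Suc.prems by (cases u) auto
  have rec: "embeddings u (alt_word x (Suc n)) = (if y = x then embeddings u' (alt_word (\<not> x) n) else 0) + embeddings u (alt_word (\<not> x) n)"
    using u by (simp add: embeddings_Cons_right)
  show ?case
  proof (cases "y = x")
    case False
    have "embeddings u (alt_word (\<not> x) n) = ((n + length u - equal_adj u) div 2) choose (length u)"
      using Suc.IH[of u "\<not> x"] Suc.prems u False by simp
    moreover have "Suc n + length u - equal_adj u - 1 = n + length u - equal_adj u"
      by simp
    ultimately show ?thesis using rec False u by simp
  next
    case True
    show ?thesis
    proof (cases u')
      case Nil
      have "embeddings u (alt_word (\<not> x) n) = n div 2"
        using Suc.IH[of u "\<not> x"] u Nil True by simp
      then show ?thesis using rec True u Nil by (simp add: embeddings_Nil_left)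
    next
      case (Cons z u'')
      define m' where "m' = length u'"
      define K where "K = n + m' - equal_adj u"
      have au: "equal_adj u = (if y = z then 1 else 0) + equal_adj u'" using u Cons by simp
      have le: "equal_adj u' \<le> m' - 1" unfolding m'_def by (rule equal_adj_le)
      have m'pos: "m' \<ge> 1" using Cons m'_def by simp
      have c1: "embeddings u' (alt_word (\<not> x) n) = (K div 2) choose m'"
      proof -
        have "embeddings u' (alt_word (\<not> x) n) = ((n + m' - equal_adj u' - (if z = (\<not> x) then 0 else 1)) div 2) choose m'"
          using Suc.IH[of u' "\<not> x"] Cons m'_def by simp
        moreover have "n + m' - equal_adj u' - (if z = (\<not> x) then 0 else 1) = K"
          unfolding K_def using au True by auto
        ultimately show ?thesis by simp
      qed
      have c2: "embeddings u (alt_word (\<not> x) n) = (K div 2) choose (Suc m')"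
      proof -
        have "embeddings u (alt_word (\<not> x) n) = ((n + Suc m' - equal_adj u - 1) div 2) choose (Suc m')"
          using Suc.IH[of u "\<not> x"] u True m'_def by simp
        moreover have "n + Suc m' - equal_adj u - 1 = K" unfolding K_def by simp
        ultimately show ?thesis by simp
      qed
      have "equal_adj u \<le> m'" using au le m'pos by auto
      then have "(Suc n + length u - equal_adj u - 0) div 2 = Suc (K div 2)"
        unfolding K_def using u m'_def by simp
      then show ?thesis using rec True c1 c2 u m'_def by simp
    qed
  qed
qed

section \<open>Descents and adjacencies of two-block permutations\<close>

lemma descent_pos:
  assumes "d \<in> descents (A @ B)" "sorted_wrt (<) A" "sorted_wrt (<) B"
  shows "Suc d = length A"
proof -
  have d: "Suc d < length A + length B" "(A @ B) ! d > (A @ B) ! Suc d"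
    using assms(1) unfolding descents_def by auto
  show ?thesis
  proof (rule ccontr)
    assume ne: "Suc d \<noteq> length A"
    show False
    proof (cases "Suc d < length A")
      case True
      then have "A ! d < A ! Suc d" using assms(2) unfolding sorted_wrt_iff_nth_less by auto
      then show False using d True by (simp add: nth_append)
    next
      case False
      then have ge: "d \<ge> length A" using ne by simp
      then have "B ! (d - length A) < B ! (Suc d - length A)"
        using assms(3) d(1) unfolding sorted_wrt_iff_nth_less by auto
      then show False using d ge by (simp add: nth_append Suc_diff_le)
    qed
  qed
qed

lemma one_descent_not_sorted:
  assumes "card (descents xs) = 1" shows "\<not> sorted xs"
proof
  assume s: "sorted xs"
  obtain d where "descents xs = {d}" using assms card_1_singletonE by blast
  then have "Suc d < length xs" "xs ! d > xs ! Suc d" unfolding descents_def by auto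
  then show False using s unfolding sorted_iff_nth_mono by (meson Suc_n_not_le_n le_SucI not_le order_refl)
qed

lemma blocks_position_of_one:
  assumes j: "j < m" "blocks q [1..<m+1] ! j = 1"
  shows "j < length (filter q [1..<m+1]) \<longleftrightarrow> q 1"
proof -
  define A where "A = filter q [1..<m+1]"
  define B where "B = filter (\<lambda>x. \<not> q x) [1..<m+1]"
  have aAB: "blocks q [1..<m+1] = A @ B" unfolding blocks_def A_def B_def by simp
  have len: "length A + length B = m" using arg_cong[OF aAB, of length] by (simp del: upt_Suc)
  show ?thesis unfolding A_def[symmetric]
  proof
    assume jA: "j < length A"
    then have "A ! j = 1" using j aAB by (simp add: nth_append)
    then have "1 \<in> set A" using jA by (metis nth_mem)
    then show "q 1" unfolding A_def by simp
  next
    assume "q 1"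
    show "j < length A"
    proof (rule ccontr)
      assume nj: "\<not> j < length A"
      then have "B ! (j - length A) = 1" using j aAB by (simp add: nth_append)
      then have "1 \<in> set B" using j len nj by (metis add_diff_inverse_nat nat_add_left_cancel_less nth_mem)
      then show False using \<open>q 1\<close> unfolding B_def by simp
    qed
  qed
qed

lemma one_before_descent_blocks:
  assumes c1: "card (descents a) = 1" and a: "a = blocks q [1..<m+1]"
  shows "one_before_descent a \<longleftrightarrow> q 1"
proof -
  define A where "A = filter q [1..<m+1]"
  have pos: "Suc d = length A" if "d \<in> descents a" for d
    using descent_pos[OF that[unfolded a blocks_def]] sorted_wrt_filter_upt unfolding A_def by blast
  obtain d where dd: "descents a = {d}" using c1 card_1_singletonE by blast
  then have "Suc d < length a" unfolding descents_def by auto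
  then have "1 \<in> set a" using a by (simp del: upt_Suc)
  then obtain j where j: "j < length a" "a ! j = 1" by (auto simp: in_set_conv_nth)
  have key: "j' \<le> d \<longleftrightarrow> q 1" if "j' < length a" "a ! j' = 1" for j'
  proof -
    have "j' < length A \<longleftrightarrow> q 1"
      using blocks_position_of_one[of j' m q] that a unfolding A_def by (simp del: upt_Suc)
    then show ?thesis using pos[of d] dd by auto
  qed
  show ?thesis
    unfolding one_before_descent_def dd using key j by blast
qed

lemma adj_set_Cons:
  assumes "zs \<noteq> []"
  shows "{j. Suc j < length (z # zs) \<and> (z # zs) ! Suc j = (z # zs) ! j + 1} =
    (if hd zs = Suc z then {0} else {}) \<union> Suc ` {j. Suc j < length zs \<and> zs ! Suc j = zs ! j + 1}"
proof (rule set_eqI)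
  fix j
  show "j \<in> {j. Suc j < length (z # zs) \<and> (z # zs) ! Suc j = (z # zs) ! j + 1} \<longleftrightarrow>
    j \<in> (if hd zs = Suc z then {0} else {}) \<union> Suc ` {j. Suc j < length zs \<and> zs ! Suc j = zs ! j + 1}"
    using assms by (cases j) (auto simp: hd_conv_nth)
qed

lemma adjacencies_Nil [simp]: "adjacencies [] = 0"
  by (simp add: adjacencies_def)

lemma adjacencies_Cons:
  "adjacencies (x # L) = (if L \<noteq> [] \<and> hd L = Suc x then 1 else 0) + adjacencies L"
proof (cases "L = []")
  case True
  then show ?thesis by (simp add: adjacencies_def)
next
  case False
  have "adjacencies (x # L) =
    card ((if hd L = Suc x then {0} else {}) \<union> Suc ` {j. Suc j < length L \<and> L ! Suc j = L ! j + 1})"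
    unfolding adjacencies_def using adj_set_Cons[OF False, of x] by simp
  also have "\<dots> = (if hd L = Suc x then 1 else 0) + adjacencies L"
  proof -
    have "finite {j. Suc j < length L \<and> L ! Suc j = L ! j + 1}"
      by (rule finite_subset[of _ "{..<length L}"]) auto
    then show ?thesis
      unfolding adjacencies_def by (subst card_Un_disjoint) (auto simp: card_image)
  qed
  finally show ?thesis using False by simp
qed

lemma adjacencies_append:
  "A \<noteq> [] \<Longrightarrow> B \<noteq> [] \<Longrightarrow> adjacencies (A @ B) = adjacencies A + adjacencies B + (if hd B = Suc (last A) then 1 else 0)"
proof (induction A)
  case Nil
  then show ?case by simp
next
  case (Cons a A')
  show ?case
  proof (cases "A' = []")
    case True
    then show ?thesis using Cons by (simp add: adjacencies_Cons)
  next
    case False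
    then show ?thesis using Cons by (simp add: adjacencies_Cons[of a "A' @ B"] adjacencies_Cons[of a A'])
  qed
qed

lemma hd_filter_upt:
  "(filter q [Suc k..<M] \<noteq> [] \<and> hd (filter q [Suc k..<M]) = Suc k) \<longleftrightarrow> (Suc k < M \<and> q (Suc k))"
proof (cases "Suc k < M")
  case True
  then have u: "[Suc k..<M] = Suc k # [Suc (Suc k)..<M]" by (simp add: upt_conv_Cons)
  show ?thesis
  proof (cases "q (Suc k)")
    case qT: True
    then show ?thesis using u \<open>Suc k < M\<close> by simp
  next
    case False
    have "filter q [Suc k..<M] \<noteq> [] \<Longrightarrow> hd (filter q [Suc k..<M]) \<noteq> Suc k"
    proof -
      assume ne: "filter q [Suc k..<M] \<noteq> []"
      then have "hd (filter q [Suc k..<M]) \<in> set (filter q [Suc (Suc k)..<M])"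
        using u False by (metis filter.simps(2) hd_in_set)
      then show ?thesis by auto
    qed
    then show ?thesis using False by auto
  qed
next
  case False
  then show ?thesis by simp
qed

lemma adjacencies_filter_upt:
  "adjacencies (filter q [k..<k+n]) + adjacencies (filter (\<lambda>x. \<not> q x) [k..<k+n]) = equal_adj (map q [k..<k+n])"
proof (induction n arbitrary: k)
  case 0
  then show ?case by simp
next
  case (Suc n)
  have u: "[k..<k + Suc n] = k # [Suc k..<Suc k + n]" by (simp add: upt_conv_Cons)
  have h1: "(filter q [Suc k..<Suc k + n] \<noteq> [] \<and> hd (filter q [Suc k..<Suc k + n]) = Suc k) \<longleftrightarrow> (0 < n \<and> q (Suc k))"
    using hd_filter_upt[of q k "Suc k + n"] by simp
  have h2: "(filter (\<lambda>x. \<not> q x) [Suc k..<Suc k + n] \<noteq> [] \<and> hd (filter (\<lambda>x. \<not> q x) [Suc k..<Suc k + n]) = Suc k) \<longleftrightarrow> (0 < n \<and> \<not> q (Suc k))"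
    using hd_filter_upt[of "\<lambda>x. \<not> q x" k "Suc k + n"] by simp
  have h3: "(map q [Suc k..<Suc k + n] \<noteq> [] \<and> hd (map q [Suc k..<Suc k + n]) = q k) \<longleftrightarrow> (0 < n \<and> q (Suc k) = q k)"
    by (cases n) (simp_all add: upt_conv_Cons del: upt_Suc)
  define R where "R = [Suc k..<Suc k + n]"
  have IH: "adjacencies (filter q R) + adjacencies (filter (\<lambda>x. \<not> q x) R) = equal_adj (map q R)"
    unfolding R_def using Suc.IH[of "Suc k"] by simp
  have aw: "equal_adj (map q (k # R)) = (if 0 < n \<and> q (Suc k) = q k then 1 else 0) + equal_adj (map q R)"
    using h3 unfolding R_def by (simp only: list.map equal_adj_Cons)
  show ?case
  proof (cases "q k")
    case True
    have "adjacencies (filter q (k # R)) = (if 0 < n \<and> q (Suc k) then 1 else 0) + adjacencies (filter q R)"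
      using h1 True unfolding R_def by (simp only: filter.simps if_True adjacencies_Cons)
    moreover have "filter (\<lambda>x. \<not> q x) (k # R) = filter (\<lambda>x. \<not> q x) R" using True by simp
    ultimately show ?thesis unfolding u R_def[symmetric] aw using IH True by simp
  next
    case False
    have "adjacencies (filter (\<lambda>x. \<not> q x) (k # R)) = (if 0 < n \<and> \<not> q (Suc k) then 1 else 0) + adjacencies (filter (\<lambda>x. \<not> q x) R)"
      using h2 False unfolding R_def by (simp only: filter.simps if_True adjacencies_Cons not_False_eq_True)
    moreover have "filter q (k # R) = filter q R" using False by simp
    ultimately show ?thesis unfolding u R_def[symmetric] aw using IH False by simp
  qed
qed

lemma sorted_le_last: "sorted xs \<Longrightarrow> x \<in> set xs \<Longrightarrow> x \<le> last xs"
proof (induction xs rule: rev_induct)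
  case Nil then show ?case by simp
next
  case (snoc a xs) then show ?case by (auto simp: sorted_append)
qed

lemma sorted_hd_le: "sorted xs \<Longrightarrow> x \<in> set xs \<Longrightarrow> hd xs \<le> x"
  by (cases xs) auto

text \<open>For an unsorted two-block permutation the junction is no adjacency, so its adjacencies
  are exactly the equal adjacent letters of its bit word.\<close>
lemma adjacencies_blocks:
  assumes ns: "\<not> sorted (blocks q [1..<m+1])"
  shows "adjacencies (blocks q [1..<m+1]) = equal_adj (map q [1..<m+1])"
proof -
  define A where "A = filter q [1..<m+1]"
  define B where "B = filter (\<lambda>x. \<not> q x) [1..<m+1]"
  have aAB: "blocks q [1..<m+1] = A @ B" unfolding blocks_def A_def B_def by simp
  have sA: "sorted A" "sorted B" unfolding A_def B_def by (rule sorted_filter_upt)+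
  have ne: "A \<noteq> []" "B \<noteq> []" using ns aAB sA by auto
  have nb: "hd B \<noteq> Suc (last A)"
  proof
    assume h: "hd B = Suc (last A)"
    have "\<forall>x\<in>set A. \<forall>y\<in>set B. x \<le> y"
    proof (intro ballI)
      fix x y assume "x \<in> set A" "y \<in> set B"
      then have "x \<le> last A" "hd B \<le> y" using sorted_le_last sorted_hd_le sA by auto
      then show "x \<le> y" using h by simp
    qed
    then have "sorted (A @ B)" using sA by (simp add: sorted_append)
    then show False using ns aAB by simp
  qed
  have "adjacencies (blocks q [1..<m+1]) = adjacencies A + adjacencies B"
    using adjacencies_append[OF ne] nb aAB by simp
  also have "\<dots> = equal_adj (map q [1..<m+1])"
    using adjacencies_filter_upt[of q 1 m] unfolding A_def B_def by simp
  finally show ?thesis .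
qed

section \<open>The Moebius function on M_n and W_n\<close>

lemma M_W_blocks:
  assumes "pi = M_perm n \<or> pi = W_perm n"
  obtains c where "alternating c" "pi = blocks c [1..<n+1]"
proof -
  have "alternating even" "alternating odd" unfolding alternating_def by simp_all
  moreover have "M_perm n = blocks even [1..<n+1]" "W_perm n = blocks odd [1..<n+1]"
    unfolding M_perm_def W_perm_def blocks_def by simp_all
  ultimately show ?thesis using assms that by blast
qed

lemma alternating_bit_word: "alternating c \<Longrightarrow> map c [1..<n+1] = alt_word (c 1) n"
  using map_alt_word[of c 1 n] by (simp add: add.commute)

lemma sum_subseqs_alternating:
  fixes g :: "bool list \<Rightarrow> 'b::comm_monoid_add"
  assumes "alternating c"
  shows "sum_list (map (\<lambda>ws. g (map c ws)) (subseqs [1..<n+1]))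
       = sum_list (map g (subseqs (alt_word (c 1) n)))"
proof -
  have "subseqs (alt_word (c 1) n) = subseqs (map c [1..<n+1])"
    using alternating_bit_word[OF assms] by simp
  then have "subseqs (alt_word (c 1) n) = map (map c) (subseqs [1..<n+1])"
    by (simp only: subseqs_map)
  then show ?thesis by (simp add: comp_def del: upt_Suc)
qed

lemma int_sum_list: "int (sum_list (map f xs)) = sum_list (map (\<lambda>x. int (f x)) xs)"
  by (induction xs) simp_all

lemma minus_one_power_diff:
  assumes "k \<le> n"
  shows "(-1::int) ^ (n - k) = (-1) ^ n * (-1) ^ k"
proof -
  have "(-1::int) ^ n = (-1) ^ (n - k) * (-1) ^ k"
    using assms by (metis le_add_diff_inverse2 power_add)
  then have "(-1::int) ^ n * (-1) ^ k = (-1) ^ (n - k) * ((-1) ^ k * (-1) ^ k)"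
    by (simp add: mult.assoc)
  also have "(-1::int) ^ k * (-1) ^ k = 1" by (simp flip: power_add)
  finally show ?thesis by simp
qed

text \<open>The criterion of mu_signed_occurrences holds below an alternating two-block permutation:
  the signed subsequence sum becomes the signed subword sum of the alternating word.\<close>
lemma alternating_delta:
  assumes c: "alternating c" and a: "is_perm a" "\<not> sorted a" "a \<preceq>\<^sub>p blocks c [1..<n+1]"
  shows "sum_list (map (\<lambda>ys. if a \<preceq>\<^sub>p ys then (-1::int) ^ (n - length ys) else 0)
           (subseqs (blocks c [1..<n+1]))) = (if a = blocks c [1..<n+1] then 1 else 0)"
proof -
  obtain q where aq: "a = blocks q [1..<length a+1]" using below_blocks[OF a(1) a(3)] by blast
  define u where "u = map q [1..<length a+1]"
  define w where "w = alt_word (c 1) n"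
  have "sum_list (map (\<lambda>ys. if a \<preceq>\<^sub>p ys then (-1::int) ^ (n - length ys) else 0)
           (subseqs (blocks c [1..<n+1])))
      = sum_list (map (\<lambda>ws. if a \<preceq>\<^sub>p blocks c ws then (-1::int) ^ (n - length ws) else 0)
           (subseqs [1..<n+1]))"
    by (subst sum_subseqs_blocks) (simp cong: if_cong del: upt_Suc)
  also have "\<dots> = sum_list (map (\<lambda>ws. (\<lambda>bs. if subseq u bs then (-1::int) ^ (n - length bs) else 0)
           (map c ws)) (subseqs [1..<n+1]))"
    using contains_blocks[OF aq a(2)] in_subseqs_upt_sorted unfolding u_def
    by (intro arg_cong[where f=sum_list] map_cong) (auto simp del: upt_Suc)
  also have "\<dots> = sum_list (map (\<lambda>bs. if subseq u bs then (-1::int) ^ (n - length bs) else 0) (subseqs w))"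
    unfolding w_def by (rule sum_subseqs_alternating[OF c])
  also have "\<dots> = (-1) ^ n * sum_list (map (\<lambda>bs. if subseq u bs then (-1::int) ^ length bs else 0) (subseqs w))"
  proof -
    have "(if subseq u bs then (-1::int) ^ (n - length bs) else 0)
        = (-1) ^ n * (if subseq u bs then (-1) ^ length bs else 0)" if "bs \<in> set (subseqs w)" for bs
      using that list_emb_length[of "(=)" bs w] minus_one_power_diff[of "length bs" n]
      unfolding w_def by simp
    then show ?thesis
      unfolding sum_list_const_mult[symmetric] by (intro arg_cong[where f=sum_list] map_cong) auto
  qed
  also have "\<dots> = (if u = w then 1 else 0)"
    unfolding w_def alt_word_signed_sum by (simp flip: power_add)
  also have "(u = w) \<longleftrightarrow> order_iso a (blocks c [1..<n+1])"
    using iso_blocks_iff[OF aq a(2) sorted_wrt_upt[of 1 "n+1"], of c] alternating_bit_word[OF c, of n]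
    unfolding u_def w_def by (auto simp del: upt_Suc)
  also have "\<dots> \<longleftrightarrow> a = blocks c [1..<n+1]"
    using perm_iso_eq[OF a(1) is_perm_blocks] order_iso_refl by (auto simp del: upt_Suc)
  finally show ?thesis .
qed

lemma mu_alternating_blocks:
  assumes c: "alternating c" and pi: "pi = blocks c [1..<n+1]"
    and s: "is_perm sigma" "\<not> sorted sigma" "sigma \<preceq>\<^sub>p pi"
  shows "mu sigma pi = (-1) ^ (n - length sigma) * occurrences sigma pi"
proof -
  have len: "length pi = n" unfolding pi by simp
  have "mu sigma pi = (-1) ^ (length pi - length sigma) * occurrences sigma pi"
  proof (rule mu_signed_occurrences[OF s(1) _ s(3)])
    show "is_perm pi" unfolding pi by (rule is_perm_blocks)
    fix a assume "a \<in> perm_interval sigma pi"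
    then have "is_perm a" "\<not> sorted a" "a \<preceq>\<^sub>p blocks c [1..<n+1]"
      using contains_not_sorted[OF _ s(2)] unfolding perm_interval_def pi by auto
    from alternating_delta[OF c this]
    show "sum_list (map (\<lambda>ys. if a \<preceq>\<^sub>p ys then (-1::int) ^ (length pi - length ys) else 0)
        (subseqs pi)) = (if a = pi then 1 else 0)"
      unfolding len pi[symmetric] .
  qed
  then show ?thesis using len by simp
qed

lemma occurrences_alternating_blocks:
  assumes c: "alternating c" and pi: "pi = blocks c [1..<n+1]" and pd: "card (descents pi) = 1"
    and s: "is_perm sigma" "length sigma = m" "card (descents sigma) = 1" "sigma \<preceq>\<^sub>p pi"
  shows "occurrences sigma pi =
    int (((n + m - adjacencies sigma - (if related sigma pi then 0 else 1)) div 2) choose m)"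
proof -
  have ns: "\<not> sorted sigma" using one_descent_not_sorted[OF s(3)] .
  obtain q where sq: "sigma = blocks q [1..<m+1]"
    using below_blocks[OF s(1) s(4)[unfolded pi]] unfolding s(2) by blast
  define u where "u = map q [1..<m+1]"
  have "occurrences sigma pi
      = sum_list (map (\<lambda>ws. if order_iso sigma (blocks c ws) then 1::int else 0) (subseqs [1..<n+1]))"
    unfolding occurrences_def pi by (rule sum_subseqs_blocks)
  also have "\<dots> = sum_list (map (\<lambda>ws. (\<lambda>bs. if bs = u then 1::int else 0) (map c ws)) (subseqs [1..<n+1]))"
    using iso_blocks_iff[OF sq ns] in_subseqs_upt_sorted unfolding u_def
    by (intro arg_cong[where f=sum_list] map_cong) (auto simp del: upt_Suc)
  also have "\<dots> = sum_list (map (\<lambda>bs. if bs = u then 1::int else 0) (subseqs (alt_word (c 1) n)))"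
    by (rule sum_subseqs_alternating[OF c])
  also have "\<dots> = int (embeddings u (alt_word (c 1) n))"
    unfolding embeddings_def int_sum_list by (intro arg_cong[where f=sum_list] map_cong) auto
  finally have occ: "occurrences sigma pi = int (embeddings u (alt_word (c 1) n))" .
  have m0: "m \<noteq> 0" using ns s(2) by auto
  then have "[1..<m+1] = 1 # [Suc 1..<m+1]" by (subst upt_rec) simp
  then have u: "u \<noteq> []" "length u = m" "hd u = q 1"
    unfolding u_def using m0 by (simp_all del: upt_Suc)
  have "adjacencies sigma = equal_adj u" using adjacencies_blocks[of q m] sq ns unfolding u_def by simp
  moreover have "related sigma pi \<longleftrightarrow> q 1 = c 1"
    unfolding related_def using one_before_descent_blocks[OF s(3) sq] one_before_descent_blocks[OF pd pi] by simp
  ultimately show ?thesis using occ embeddings_alt_word[OF u(1), of "c 1" n] u by simp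
qed

theorem mainTheorem12:
  fixes sigma pi :: "nat list" and m n i :: nat
  assumes "is_perm sigma" and "length sigma = m"
    and "card (descents sigma) = 1" and "adjacencies sigma = i"
    and "pi = M_perm n \<or> pi = W_perm n"
    and "card (descents pi) = 1"
    and "sigma \<preceq>\<^sub>p pi"
  shows "mu sigma pi = (-1) ^ (n - m) *
           int (((n + m - i - (if related sigma pi then 0 else 1)) div 2) choose m)"
proof -
  obtain c where c: "alternating c" and pi: "pi = blocks c [1..<n+1]"
    using M_W_blocks[OF assms(5)] by blast
  have "mu sigma pi = (-1) ^ (n - m) * occurrences sigma pi"
    using mu_alternating_blocks[OF c pi assms(1) one_descent_not_sorted[OF assms(3)] assms(7)]
      assms(2) by simp
  also have "occurrences sigma pi =
      int (((n + m - i - (if related sigma pi then 0 else 1)) div 2) choose m)"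
    using occurrences_alternating_blocks[OF c pi assms(6,1,2,3,7)] assms(4) by simp
  finally show ?thesis .
qed

end
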